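(* Let $G$ be a full 1-plane graph satisfying the kite-edge standing assumption, let $S$ be a minimal separating set of $G$, and let $v\in S$. Let $(v,t_1)$ and $(v,t_2)$ be edges of $G$ with $t_1$ and $t_2$ in different flaps of $G-S$. Then there is a transition face $F$ of $G^\times$ incident to $v$ whose corresponding cell lies clockwise between $(v,t_1)$ and $(v,t_2)$ in $\rho_G(v)$.
   Context: A 1-plane graph is a graph $G$ with a good drawing in the plane (edges are simple curves; two edges intersect only at a common endpoint or a proper crossing; any two edges intersect at most once; no three edges cross at one point) in which every edge is crossed at most once. For a crossing of edges $(u,v)$ and $(w,x)$, its endpoints are $u,v,w,x$; two endpoints are consecutive if they are not $\{u,v\}$ and not $\{w,x\}$. $G$ is full 1-plane if for every crossing every two consecutive endpoints are adjacent. The planarization $G^\times$ replaces each crossing point by a new dummy vertex adjacent to the four endpoints. An edge joining consecutive endpoints $u,x$ of a crossing with dummy vertex $c$ is a kite edge if it is uncrossed and $G^\times$ has a face bounded exactly by it and $(u,c),(c,x)$. Standing assumption: for every crossing and every pair of adjacent consecutive endpoints, some edge joining them is a kite edge of that crossing. A separating set $S\subseteq V(G)$ is one with $G-S$ disconnected; the flaps are the connected components of $G-S$. A face $F$ of $G^\times$ is a transition face if $F$ is incident to an edge of $G^\times$ with both endpoints in $S$, or $F$ is incident to vertices from two different flaps. A cell is a connected region of the plane minus the drawing of $G$; each face of $G^\times$ corresponds to the cell occupying the same region. The rotation $\rho_G(v)$ is the clockwise cyclic order of the edges of $G$ incident to $v$ and the cells incident to $v$ around $v$ (obtained from the rotation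 at $v$ in $G^\times$ by replacing each edge by the corresponding edge of $G$ and each face by its cell). An element $y$ lies clockwise between $x$ and $z$ if $\rho_G(v)$ contains $x,y,z$ in this cyclic order. *)

theory Defs
  imports Main
begin

text \<open>
Combinatorial model of a 1-plane graph G via its planarization G^x, given as a
connected plane map (rotation system).  Vertices of G^x are the real vertices
(verts) and the dummy crossing vertices (cross).  Every edge of G^x is a pair of
opposite darts d, rev d; tail d is the vertex a dart starts at; nxt d is the
next dart clockwise around tail d.  The angle (corner) clockwise after dart d at
tail d lies in the face (of G^x, equivalently the cell of G) that is the orbit
of d under fstep d = rev (nxt d); a face is incident to a vertex w iff its orbit
contains a dart with tail w, and incident to an edge iff its orbit contains one
of the two darts of that edge.
\<close>

record ('a, 'd) pmap =
  verts :: "'a set"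
  cross :: "'a set"
  darts :: "'d set"
  tail  :: "'d \<Rightarrow> 'a"
  rev   :: "'d \<Rightarrow> 'd"
  nxt   :: "'d \<Rightarrow> 'd"

definition head :: "('a,'d) pmap \<Rightarrow> 'd \<Rightarrow> 'a" where
  "head M d = tail M (rev M d)"

definition fstep :: "('a,'d) pmap \<Rightarrow> 'd \<Rightarrow> 'd" where
  "fstep M d = rev M (nxt M d)"

definition face :: "('a,'d) pmap \<Rightarrow> 'd \<Rightarrow> 'd set" where
  "face M d = {(fstep M ^^ n) d | n. True}"

definition faces :: "('a,'d) pmap \<Rightarrow> 'd set set" where
  "faces M = face M ` darts M"

definition xadj :: "('a,'d) pmap \<Rightarrow> 'a \<Rightarrow> 'a \<Rightarrow> bool" where
  "xadj M a b = (\<exists>d\<in>darts M. tail M d = a \<and> head M d = b)"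

definition plane_map :: "('a,'d) pmap \<Rightarrow> bool" where
  "plane_map M \<longleftrightarrow>
     finite (verts M \<union> cross M) \<and> verts M \<noteq> {} \<and> verts M \<inter> cross M = {} \<and>
     finite (darts M) \<and>
     (\<forall>d\<in>darts M. tail M d \<in> verts M \<union> cross M) \<and>
     bij_betw (rev M) (darts M) (darts M) \<and>
     (\<forall>d\<in>darts M. rev M (rev M d) = d \<and> rev M d \<noteq> d \<and> tail M (rev M d) \<noteq> tail M d) \<and>
     bij_betw (nxt M) (darts M) (darts M) \<and>
     (\<forall>d\<in>darts M. tail M (nxt M d) = tail M d) \<and>
     (\<forall>d\<in>darts M. \<forall>d'\<in>darts M. tail M d = tail M d' \<longrightarrow> (\<exists>n. (nxt M ^^ n) d = d')) \<and>
     (\<forall>x\<in>verts M \<union> cross M. \<forall>y\<in>verts M \<union> cross M. (xadj M)\<^sup>*\<^sup>* x y) \<and>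
     (darts M \<noteq> {} \<longrightarrow>
        int (card (verts M \<union> cross M)) - int (card (darts M) div 2) + int (card (faces M)) = 2)"

text \<open>The other endpoint, in G, of the edge of G whose first half is dart d
  (d starting at a real vertex): if d ends at a crossing, continue straight
  through the crossing (the opposite dart in the rotation at the crossing).\<close>
definition gend :: "('a,'d) pmap \<Rightarrow> 'd \<Rightarrow> 'a" where
  "gend M d = (if head M d \<in> cross M then head M ((nxt M ^^ 2) (rev M d)) else head M d)"

definition gadj :: "('a,'d) pmap \<Rightarrow> 'a \<Rightarrow> 'a \<Rightarrow> bool" where
  "gadj M a b = (\<exists>d\<in>darts M. a \<in> verts M \<and> tail M d = a \<and> gend M d = b)"

text \<open>Good drawing with each edge crossed at most once: each dummy vertex has
  degree 4, its four neighbours are real vertices (no edge crossed twice) and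
  pairwise distinct (two edges meet at most once; crossing edges share no endpoint).\<close>
definition one_plane :: "('a,'d) pmap \<Rightarrow> bool" where
  "one_plane M \<longleftrightarrow>
     (\<forall>c\<in>cross M. card {d\<in>darts M. tail M d = c} = 4 \<and>
        card (head M ` {d\<in>darts M. tail M d = c}) = 4 \<and>
        (\<forall>d\<in>darts M. tail M d = c \<longrightarrow> head M d \<in> verts M))"

definition full :: "('a,'d) pmap \<Rightarrow> bool" where
  "full M \<longleftrightarrow> (\<forall>c\<in>cross M. \<forall>d\<in>darts M. tail M d = c \<longrightarrow>
      gadj M (head M d) (head M (nxt M d)))"

text \<open>For dart d from crossing c to u, with x = head of nxt d: there is an
  (uncrossed) edge e from u to x such that the face containing the angle between
  (c,u) and (c,x) is bounded exactly by (c,u), (x,c), e.\<close>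
definition kite_face :: "('a,'d) pmap \<Rightarrow> 'd \<Rightarrow> bool" where
  "kite_face M d \<longleftrightarrow>
     (fstep M ^^ 3) d = d \<and>
     tail M ((fstep M ^^ 2) d) = head M d \<and>
     head M ((fstep M ^^ 2) d) = head M (nxt M d) \<and>
     head M d \<in> verts M \<and> head M (nxt M d) \<in> verts M"

definition kite_assumption :: "('a,'d) pmap \<Rightarrow> bool" where
  "kite_assumption M \<longleftrightarrow> (\<forall>c\<in>cross M. \<forall>d\<in>darts M. tail M d = c \<longrightarrow>
      gadj M (head M d) (head M (nxt M d)) \<longrightarrow> kite_face M d)"

text \<open>Connectivity in G - S (a, b in the same flap).\<close>
definition conn_minus :: "('a,'d) pmap \<Rightarrow> 'a set \<Rightarrow> 'a \<Rightarrow> 'a \<Rightarrow> bool" where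
  "conn_minus M S a b =
     (\<lambda>x y. x \<in> verts M - S \<and> y \<in> verts M - S \<and> gadj M x y)\<^sup>*\<^sup>* a b"

definition separating :: "('a,'d) pmap \<Rightarrow> 'a set \<Rightarrow> bool" where
  "separating M S \<longleftrightarrow> S \<subseteq> verts M \<and>
     (\<exists>a\<in>verts M - S. \<exists>b\<in>verts M - S. \<not> conn_minus M S a b)"

definition min_separating :: "('a,'d) pmap \<Rightarrow> 'a set \<Rightarrow> bool" where
  "min_separating M S \<longleftrightarrow> separating M S \<and> (\<forall>S'. S' \<subset> S \<longrightarrow> \<not> separating M S')"

definition transition_face :: "('a,'d) pmap \<Rightarrow> 'a set \<Rightarrow> 'd set \<Rightarrow> bool" where
  "transition_face M S F \<longleftrightarrow> F \<in> faces M \<and>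
     ((\<exists>d\<in>F. tail M d \<in> S \<and> head M d \<in> S) \<or>
      (\<exists>d1\<in>F. \<exists>d2\<in>F. tail M d1 \<in> verts M - S \<and> tail M d2 \<in> verts M - S \<and>
          \<not> conn_minus M S (tail M d1) (tail M d2)))"

end

theory Submission
  imports Defs
begin

text \<open>
Walk clockwise around v from the dart towards t1 to the dart towards t2 and suppose no face
in between is a transition face. Each such face has its two boundary neighbours of v outside
S, and consecutive real neighbours of v lie in a common face, hence in a common flap. Where a
dart of v runs into a crossing, the kite edges show that the neighbours of v just before and
just after it are the two endpoints of the edge crossing it, hence adjacent, and also link the
crossing edge's far endpoint to the neighbour next to it. Chaining these steps gives a path
from t1 to t2 in G - S, contradicting that they lie in different flaps.
\<close>

lemma funpow_mem:
  "f ` A \<subseteq> A \<Longrightarrow> x \<in> A \<Longrightarrow> (f ^^ n) x \<in> A"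
  by (induction n) auto

lemma funpow_diff_inj_on:
  assumes "inj_on f A" "f ` A \<subseteq> A" "x \<in> A" "(f ^^ (i + k)) x = (f ^^ i) x"
  shows "(f ^^ k) x = x"
  using assms(4)
proof (induction i)
  case (Suc i)
  have "(f ^^ (i + k)) x \<in> A" "(f ^^ i) x \<in> A"
    using funpow_mem assms(2,3) by metis+
  with Suc.prems have "(f ^^ (i + k)) x = (f ^^ i) x"
    using assms(1) by (simp add: inj_on_eq_iff)
  then show ?case by (rule Suc.IH)
qed simp

lemma funpow_card_eq_self:
  assumes fin: "finite A" and inj: "inj_on f A" and closed: "f ` A \<subseteq> A" and x: "x \<in> A"
    and trans: "\<And>y. y \<in> A \<Longrightarrow> \<exists>n. (f ^^ n) x = y"
  shows "(f ^^ card A) x = x"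
proof -
  let ?g = "\<lambda>i. (f ^^ i) x"
  have "\<not> inj_on ?g {..card A}"
  proof
    assume "inj_on ?g {..card A}"
    moreover have "?g ` {..card A} \<subseteq> A" using funpow_mem[OF closed x] by blast
    ultimately have "card {..card A} \<le> card A" using card_inj_on_le fin by blast
    then show False by simp
  qed
  then obtain i j where ij: "i < j" "j \<le> card A" "?g i = ?g j"
    unfolding inj_on_def by (metis atMost_iff linorder_neqE_nat)
  define q where "q = j - i"
  have period: "(f ^^ q) x = x"
    using funpow_diff_inj_on[OF inj closed x, of i q] ij unfolding q_def by simp
  have "A \<subseteq> ?g ` {..<q}"
  proof
    fix y assume "y \<in> A"
    then obtain n where "?g n = y" using trans by blast
    then have "?g (n mod q) = y" using funpow_mod_eq[OF period] by simp
    moreover have "n mod q < q" using ij unfolding q_def by simp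
    ultimately show "y \<in> ?g ` {..<q}" by blast
  qed
  then have "card A \<le> card (?g ` {..<q})" by (simp add: card_mono)
  also have "\<dots> \<le> q" using card_image_le[of "{..<q}" ?g] by simp
  finally have "card A \<le> q" .
  then have "q = card A" using ij unfolding q_def by simp
  then show ?thesis using period by simp
qed

lemma plane_mapD:
  assumes "plane_map M"
  shows finite_darts: "finite (darts M)"
    and verts_cross_disjoint: "verts M \<inter> cross M = {}"
    and tail_in_vertices: "\<And>d. d \<in> darts M \<Longrightarrow> tail M d \<in> verts M \<union> cross M"
    and rev_in_darts: "\<And>d. d \<in> darts M \<Longrightarrow> rev M d \<in> darts M"
    and nxt_in_darts: "\<And>d. d \<in> darts M \<Longrightarrow> nxt M d \<in> darts M"
    and rev_rev: "\<And>d. d \<in> darts M \<Longrightarrow> rev M (rev M d) = d"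
    and tail_nxt: "\<And>d. d \<in> darts M \<Longrightarrow> tail M (nxt M d) = tail M d"
    and inj_on_nxt: "inj_on (nxt M) (darts M)"
    and inj_on_rev: "inj_on (rev M) (darts M)"
    and rotation_transitive: "\<And>d d'. d \<in> darts M \<Longrightarrow> d' \<in> darts M \<Longrightarrow>
           tail M d = tail M d' \<Longrightarrow> \<exists>n. (nxt M ^^ n) d = d'"
  using assms unfolding plane_map_def bij_betw_def by auto

lemma tail_rev: "tail M (rev M d) = head M d"
  unfolding head_def ..

lemma head_in_vertices:
  "plane_map M \<Longrightarrow> d \<in> darts M \<Longrightarrow> head M d \<in> verts M \<union> cross M"
  unfolding head_def by (rule tail_in_vertices[OF _ rev_in_darts])

lemma nxt_funpow_in_darts: "plane_map M \<Longrightarrow> d \<in> darts M \<Longrightarrow> (nxt M ^^ n) d \<in> darts M"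
  by (induction n) (auto dest: nxt_in_darts)

lemma tail_nxt_funpow: "plane_map M \<Longrightarrow> d \<in> darts M \<Longrightarrow> tail M ((nxt M ^^ n) d) = tail M d"
  by (induction n) (auto simp: tail_nxt nxt_funpow_in_darts)

lemma nxt_funpow_4_at_cross:
  assumes pm: "plane_map M" and op: "one_plane M" and c: "c \<in> cross M"
    and r: "r \<in> darts M" "tail M r = c"
  shows "(nxt M ^^ 4) r = r"
proof -
  let ?A = "{d \<in> darts M. tail M d = c}"
  have "(nxt M ^^ card ?A) r = r"
  proof (rule funpow_card_eq_self)
    show "finite ?A" using finite_darts[OF pm] by simp
    show "inj_on (nxt M) ?A" using inj_on_nxt[OF pm] by (rule inj_on_subset) auto
    show "nxt M ` ?A \<subseteq> ?A" using nxt_in_darts[OF pm] tail_nxt[OF pm] by auto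
  qed (use r rotation_transitive[OF pm] in auto)
  moreover have "card ?A = 4" using op c unfolding one_plane_def by auto
  ultimately show ?thesis by simp
qed

lemma fstep_in_darts: "plane_map M \<Longrightarrow> d \<in> darts M \<Longrightarrow> fstep M d \<in> darts M"
  unfolding fstep_def by (auto dest: rev_in_darts nxt_in_darts)

lemma inj_on_fstep:
  assumes pm: "plane_map M"
  shows "inj_on (fstep M) (darts M)"
proof (rule inj_onI)
  fix x y assume xy: "x \<in> darts M" "y \<in> darts M" "fstep M x = fstep M y"
  then have "nxt M x = nxt M y"
    using inj_on_rev[OF pm] nxt_in_darts[OF pm] unfolding fstep_def by (simp add: inj_on_eq_iff)
  then show "x = y" using inj_on_nxt[OF pm] xy by (simp add: inj_on_eq_iff)
qed

lemma face_self: "d \<in> face M d"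
  unfolding face_def by (auto intro!: exI[where x=0])

lemma fstep_in_face: "fstep M d \<in> face M d"
  unfolding face_def by (auto intro!: exI[where x=1])

lemma face_subset_darts:
  assumes pm: "plane_map M" and d: "d \<in> darts M"
  shows "face M d \<subseteq> darts M"
proof -
  have "fstep M ` darts M \<subseteq> darts M" using fstep_in_darts[OF pm] by blast
  then show ?thesis unfolding face_def by (auto intro: funpow_mem[OF _ d])
qed

lemma face_pred:
  assumes pm: "plane_map M" and d: "d \<in> darts M"
  obtains p where "p \<in> face M d" "fstep M p = d"
proof -
  have sub: "face M d \<subseteq> darts M" using face_subset_darts[OF pm d] .
  have fin: "finite (face M d)" using sub finite_darts[OF pm] by (rule finite_subset)
  have "(fstep M ^^ card (face M d)) d = d"
  proof (rule funpow_card_eq_self[OF fin])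
    show "inj_on (fstep M) (face M d)" using inj_on_fstep[OF pm] sub by (rule inj_on_subset)
    show "fstep M ` face M d \<subseteq> face M d"
    proof (rule image_subsetI)
      fix x assume "x \<in> face M d"
      then obtain n where "x = (fstep M ^^ n) d" unfolding face_def by blast
      then show "fstep M x \<in> face M d" unfolding face_def by (auto intro!: exI[of _ "Suc n"])
    qed
    show "d \<in> face M d" by (rule face_self)
    show "\<exists>n. (fstep M ^^ n) d = y" if "y \<in> face M d" for y
      using that unfolding face_def by blast
  qed
  moreover have "card (face M d) > 0" using fin face_self[of d M] by (auto simp: card_gt_0_iff)
  ultimately have "fstep M ((fstep M ^^ (card (face M d) - 1)) d) = d"
    by (metis Suc_diff_1 funpow.simps(2) o_apply)
  moreover have "(fstep M ^^ (card (face M d) - 1)) d \<in> face M d" unfolding face_def by blast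
  ultimately show ?thesis using that by blast
qed

lemma conn_minus_step:
  "a \<in> verts M - S \<Longrightarrow> b \<in> verts M - S \<Longrightarrow> gadj M a b \<Longrightarrow> conn_minus M S a b"
  unfolding conn_minus_def by (rule r_into_rtranclp) simp

lemma conn_minus_trans [trans]:
  "conn_minus M S a b \<Longrightarrow> conn_minus M S b c \<Longrightarrow> conn_minus M S a c"
  unfolding conn_minus_def by (rule rtranclp_trans)

lemma conn_minus_refl: "conn_minus M S a a"
  unfolding conn_minus_def by simp

lemma conn_minus_chain:
  "(\<And>k. k < n \<Longrightarrow> conn_minus M S (f k) (f (Suc k))) \<Longrightarrow> conn_minus M S (f 0) (f n)"
proof (induction n)
  case (Suc n)
  have "conn_minus M S (f 0) (f n)" using Suc by simp
  also have "conn_minus M S (f n) (f (Suc n))" using Suc.prems by simp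
  finally show ?case .
qed (rule conn_minus_refl)

lemma gadj_opposite_at_cross:
  assumes pm: "plane_map M" and op: "one_plane M" and c: "c \<in> cross M"
    and r: "r \<in> darts M" "tail M r = c"
  shows "gadj M (head M (nxt M r)) (head M ((nxt M ^^ 3) r))"
proof -
  let ?d = "rev M (nxt M r)"
  have nr: "nxt M r \<in> darts M" "tail M (nxt M r) = c" using nxt_in_darts[OF pm] tail_nxt[OF pm] r by auto
  have rev_d: "rev M ?d = nxt M r" using rev_rev[OF pm] nr by auto
  have "gend M ?d = head M ((nxt M ^^ 2) (nxt M r))"
    unfolding gend_def head_def rev_d using nr c by simp
  also have "\<dots> = head M ((nxt M ^^ 3) r)" by (simp add: numeral_eq_Suc funpow_swap1)
  finally show ?thesis
    unfolding gadj_def using rev_in_darts[OF pm nr(1)] op c nr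
    by (intro bexI[of _ ?d]) (auto simp: tail_rev one_plane_def)
qed

lemma kite_face_at_cross:
  assumes "full M" "kite_assumption M" "d \<in> darts M" "tail M d \<in> cross M"
  shows "kite_face M d"
  using assms unfolding full_def kite_assumption_def by blast

text \<open>The face clockwise after a dart e into a crossing is a kite face: the next dart at the
  tail of e ends at the crossing's endpoint preceding e in the rotation at the crossing.\<close>

lemma kite_after_cross:
  assumes pm: "plane_map M" and op: "one_plane M" and "full M" "kite_assumption M"
    and e: "e \<in> darts M" and c: "head M e \<in> cross M"
  shows "head M (nxt M e) = head M ((nxt M ^^ 3) (rev M e)) \<and> head M (nxt M e) \<in> verts M"
proof -
  define r where "r = rev M e"
  have r: "r \<in> darts M" "tail M r = head M e"
    unfolding r_def using rev_in_darts[OF pm e] tail_rev by auto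
  define p where "p = (nxt M ^^ 3) r"
  have p: "p \<in> darts M" "tail M p = head M e"
    unfolding p_def using nxt_funpow_in_darts[OF pm r(1)] tail_nxt_funpow[OF pm r(1)] r(2) by auto
  have "nxt M p = (nxt M ^^ 4) r" unfolding p_def by (simp add: numeral_eq_Suc)
  then have "nxt M p = r" using nxt_funpow_4_at_cross[OF pm op c r] by simp
  then have "fstep M p = e" unfolding fstep_def r_def using rev_rev[OF pm e] by simp
  then have "(fstep M ^^ 2) p = fstep M e" by (simp add: numeral_2_eq_2)
  moreover have kite: "kite_face M p"
    by (rule kite_face_at_cross[OF assms(3,4) p(1)]) (simp add: p(2) c)
  ultimately have "tail M (fstep M e) = head M p" unfolding kite_face_def by metis
  then have "head M (nxt M e) = head M p" by (simp add: fstep_def tail_rev)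
  moreover have "head M p \<in> verts M" using kite unfolding kite_face_def by simp
  ultimately show ?thesis unfolding p_def r_def by simp
qed

lemma kite_before_cross:
  assumes pm: "plane_map M" and "full M" "kite_assumption M"
    and e: "e \<in> darts M" and c: "head M (nxt M e) \<in> cross M"
  shows "head M e = head M (nxt M (rev M (nxt M e))) \<and> head M e \<in> verts M"
proof -
  define q where "q = rev M (nxt M e)"
  have q: "q \<in> darts M" "tail M q = head M (nxt M e)"
    unfolding q_def using rev_in_darts[OF pm] nxt_in_darts[OF pm] e tail_rev by auto
  have kite: "kite_face M q"
    by (rule kite_face_at_cross[OF assms(2,3) q(1)]) (simp add: q(2) c)
  have q2: "(fstep M ^^ 2) q \<in> darts M"
    using funpow_mem[of "fstep M" "darts M"] fstep_in_darts[OF pm] q(1) by blast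
  have "fstep M ((fstep M ^^ 2) q) = (fstep M ^^ 3) q" by (simp add: numeral_eq_Suc)
  also have "\<dots> = fstep M e" using kite unfolding kite_face_def q_def fstep_def by simp
  finally have "(fstep M ^^ 2) q = e"
    using inj_on_fstep[OF pm] q2 e by (simp add: inj_on_eq_iff)
  then show ?thesis using kite unfolding kite_face_def q_def by metis
qed

lemma not_transition_faceD:
  assumes "\<not> transition_face M S (face M e)" "e \<in> darts M"
  shows not_transition_face_dart: "d \<in> face M e \<Longrightarrow> tail M d \<in> S \<Longrightarrow> head M d \<notin> S"
    and not_transition_face_conn: "d \<in> face M e \<Longrightarrow> d' \<in> face M e \<Longrightarrow>
          tail M d \<in> verts M - S \<Longrightarrow> tail M d' \<in> verts M - S \<Longrightarrow>
          conn_minus M S (tail M d) (tail M d')"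
  using assms unfolding transition_face_def faces_def by blast+

lemma heads_notin_of_not_transition_face:
  assumes pm: "plane_map M" and e: "e \<in> darts M" and tS: "tail M e \<in> S"
    and nt: "\<not> transition_face M S (face M e)"
  shows "head M e \<notin> S" "head M (nxt M e) \<notin> S"
proof -
  show "head M e \<notin> S" using not_transition_face_dart[OF nt e face_self tS] .
  have "rev M (nxt M e) \<in> face M e" using fstep_in_face unfolding fstep_def by metis
  moreover have "head M (rev M (nxt M e)) = tail M e"
    unfolding head_def using rev_rev[OF pm nxt_in_darts[OF pm e]] tail_nxt[OF pm e] by simp
  ultimately show "head M (nxt M e) \<notin> S"
    using not_transition_face_dart[OF nt e] tS tail_rev by metis
qed

text \<open>Both heads are tails of darts of the face: the first one of the dart preceding e.\<close>

lemma conn_heads_of_not_transition_face: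
  assumes pm: "plane_map M" and e: "e \<in> darts M" and tS: "tail M e \<in> S"
    and nt: "\<not> transition_face M S (face M e)"
    and real: "head M e \<in> verts M" "head M (nxt M e) \<in> verts M"
  shows "conn_minus M S (head M e) (head M (nxt M e))"
proof -
  obtain p where p: "p \<in> face M e" "fstep M p = e" using face_pred[OF pm e] .
  have pD: "p \<in> darts M" using p(1) face_subset_darts[OF pm e] by blast
  have "nxt M p = rev M e"
    using p(2) nxt_in_darts[OF pm] rev_rev[OF pm] pD unfolding fstep_def by metis
  then have tp: "tail M p = head M e" using tail_nxt[OF pm pD] tail_rev by metis
  have "rev M (nxt M e) \<in> face M e" using fstep_in_face unfolding fstep_def by metis
  from not_transition_face_conn[OF nt e p(1) this] show ?thesis
    using tp real heads_notin_of_not_transition_face[OF pm e tS nt] by (simp add: tail_rev)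
qed

text \<open>A real neighbour of the tail of e; when head e is a crossing, the head of the next dart
  is real by kite_after_cross.\<close>

definition real_head :: "('a, 'd) pmap \<Rightarrow> 'd \<Rightarrow> 'a" where
  "real_head M e = (if head M e \<in> verts M then head M e else head M (nxt M e))"

lemma real_head_eq:
  assumes "plane_map M" "one_plane M" "full M" "kite_assumption M" "e \<in> darts M"
    and "head M e \<notin> verts M"
  shows "real_head M e = head M (nxt M e)" "head M (nxt M e) \<in> verts M"
  using assms kite_after_cross head_in_vertices unfolding real_head_def by fastforce+

lemma conn_real_head_nxt:
  assumes pm: "plane_map M" and op: "one_plane M" and full: "full M" and kite: "kite_assumption M"
    and e: "e \<in> darts M" and tS: "tail M e \<in> S"
    and nt: "\<not> transition_face M S (face M e)" "\<not> transition_face M S (face M (nxt M e))"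
  shows "conn_minus M S (real_head M e) (real_head M (nxt M e))"
proof -
  have e': "nxt M e \<in> darts M" "tail M (nxt M e) \<in> S" using e tS nxt_in_darts[OF pm] tail_nxt[OF pm] by auto
  consider "head M e \<notin> verts M" | "head M e \<in> verts M" "head M (nxt M e) \<in> verts M"
    | "head M e \<in> verts M" "head M (nxt M e) \<in> cross M"
    using head_in_vertices[OF pm e'(1)] by blast
  then show ?thesis
  proof cases
    case 1
    then show ?thesis using real_head_eq[OF pm op full kite e] conn_minus_refl
      unfolding real_head_def[of M "nxt M e"] by simp
  next
    case 2
    then show ?thesis using conn_heads_of_not_transition_face[OF pm e tS nt(1)]
      unfolding real_head_def by simp
  next
    case 3
    let ?r = "rev M (nxt M e)"
    have r: "?r \<in> darts M" "tail M ?r = head M (nxt M e)" using rev_in_darts[OF pm e'(1)] tail_rev by auto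
    have before: "head M e = head M (nxt M ?r)"
      using kite_before_cross[OF pm full kite e 3(2)] by simp
    have after: "head M (nxt M (nxt M e)) = head M ((nxt M ^^ 3) ?r)"
      "head M (nxt M (nxt M e)) \<in> verts M"
      using kite_after_cross[OF pm op full kite e'(1) 3(2)] by auto
    have "gadj M (head M e) (head M (nxt M (nxt M e)))"
      using gadj_opposite_at_cross[OF pm op 3(2) r] before after by simp
    moreover have "real_head M (nxt M e) = head M (nxt M (nxt M e))"
      using 3 verts_cross_disjoint[OF pm] unfolding real_head_def by auto
    ultimately show ?thesis
      using 3 after heads_notin_of_not_transition_face[OF pm e tS nt(1)]
        heads_notin_of_not_transition_face[OF pm e'(1,2) nt(2)]
      by (simp add: real_head_def conn_minus_step)
  qed
qed

lemma conn_gend_real_head: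
  assumes pm: "plane_map M" and op: "one_plane M" and full: "full M" and kite: "kite_assumption M"
    and e: "e \<in> darts M" and tS: "tail M e \<in> S"
    and nt: "\<not> transition_face M S (face M e)" and t: "gend M e \<in> verts M - S"
  shows "conn_minus M S (gend M e) (real_head M e)"
proof (cases "head M e \<in> verts M")
  case True
  then show ?thesis
    using verts_cross_disjoint[OF pm] conn_minus_refl unfolding gend_def real_head_def by auto
next
  case False
  let ?r = "rev M e"
  have c: "head M e \<in> cross M" using False head_in_vertices[OF pm e] by blast
  have d: "(nxt M ^^ 2) ?r \<in> darts M" "tail M ((nxt M ^^ 2) ?r) \<in> cross M"
    using nxt_funpow_in_darts tail_nxt_funpow rev_in_darts pm e c tail_rev by metis+
  have "gadj M (gend M e) (head M ((nxt M ^^ 3) ?r))"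
    using full d c unfolding full_def gend_def by (simp add: numeral_eq_Suc)
  moreover have "real_head M e = head M ((nxt M ^^ 3) ?r)"
    using False kite_after_cross[OF pm op full kite e c] unfolding real_head_def by simp
  ultimately show ?thesis
    using t False real_head_eq[OF pm op full kite e] heads_notin_of_not_transition_face[OF pm e tS nt]
    by (metis DiffI conn_minus_step)
qed

lemma conn_real_head_gend_nxt:
  assumes pm: "plane_map M" and op: "one_plane M" and full: "full M" and kite: "kite_assumption M"
    and e: "e \<in> darts M" and tS: "tail M e \<in> S"
    and nt: "\<not> transition_face M S (face M e)" and t: "gend M (nxt M e) \<in> verts M - S"
  shows "conn_minus M S (real_head M e) (gend M (nxt M e))"
proof -
  have e': "nxt M e \<in> darts M" using nxt_in_darts[OF pm e] .
  consider "head M e \<notin> verts M" | "head M e \<in> verts M" "head M (nxt M e) \<in> verts M"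
    | "head M e \<in> verts M" "head M (nxt M e) \<in> cross M"
    using head_in_vertices[OF pm e'] by blast
  then show ?thesis
  proof cases
    case 1
    then show ?thesis using real_head_eq[OF pm op full kite e] verts_cross_disjoint[OF pm]
      conn_minus_refl unfolding gend_def by auto
  next
    case 2
    then show ?thesis using conn_heads_of_not_transition_face[OF pm e tS nt]
      verts_cross_disjoint[OF pm] unfolding real_head_def gend_def by auto
  next
    case 3
    let ?q = "nxt M (rev M (nxt M e))"
    have q: "?q \<in> darts M" "tail M ?q \<in> cross M"
      using 3 e' rev_in_darts[OF pm] nxt_in_darts[OF pm] tail_nxt[OF pm] by (auto simp: tail_rev)
    have "gadj M (head M e) (gend M (nxt M e))"
      using full q 3 kite_before_cross[OF pm full kite e 3(2)]
      unfolding full_def gend_def by (simp add: numeral_eq_Suc)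
    then show ?thesis
      using 3 t heads_notin_of_not_transition_face[OF pm e tS nt]
      by (simp add: real_head_def conn_minus_step)
  qed
qed

lemma conn_gend_of_no_transition_face:
  assumes pm: "plane_map M" and op: "one_plane M" and full: "full M" and kite: "kite_assumption M"
    and d: "d \<in> darts M" and tS: "tail M d \<in> S" and m: "m > 0"
    and nt: "\<And>k. k < m \<Longrightarrow> \<not> transition_face M S (face M ((nxt M ^^ k) d))"
    and t: "gend M d \<in> verts M - S" "gend M ((nxt M ^^ m) d) \<in> verts M - S"
  shows "conn_minus M S (gend M d) (gend M ((nxt M ^^ m) d))"
proof -
  define e where "e k = (nxt M ^^ k) d" for k
  have e: "e k \<in> darts M" "tail M (e k) \<in> S" "e (Suc k) = nxt M (e k)" for k
    unfolding e_def using nxt_funpow_in_darts[OF pm d] tail_nxt_funpow[OF pm d] tS by auto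
  have nt_e: "\<not> transition_face M S (face M (e k))" if "k < m" for k
    using nt[OF that] unfolding e_def .
  have last: "e m = nxt M (e (m - 1))" using e(3)[of "m - 1"] m by simp
  have "conn_minus M S (gend M (e 0)) (real_head M (e 0))"
    using conn_gend_real_head[OF pm op full kite e(1,2) nt_e[OF m]] t(1) by (simp add: e_def)
  also have "conn_minus M S (real_head M (e 0)) (real_head M (e (m - 1)))"
  proof (rule conn_minus_chain[of "m - 1" M S "\<lambda>k. real_head M (e k)"])
    fix k assume "k < m - 1"
    then have "\<not> transition_face M S (face M (e k))"
      "\<not> transition_face M S (face M (nxt M (e k)))"
      using nt_e[of k] nt_e[of "Suc k"] e(3)[of k] by auto
    then show "conn_minus M S (real_head M (e k)) (real_head M (e (Suc k)))"
      using conn_real_head_nxt[OF pm op full kite e(1,2)] e(3) by simp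
  qed
  also have "conn_minus M S (real_head M (e (m - 1))) (gend M (e m))"
    using conn_real_head_gend_nxt[OF pm op full kite e(1,2) nt_e[of "m - 1"]] t(2) m last
    by (simp add: e_def)
  finally show ?thesis unfolding e_def by simp
qed

theorem claim2:
  fixes M :: "('a, 'd) pmap"
  assumes "plane_map M" and "one_plane M" and "full M" and "kite_assumption M"
    and "min_separating M S" and "v \<in> S"
    and "d1 \<in> darts M" and "tail M d1 = v" and "gend M d1 = t1"
    and "d2 \<in> darts M" and "tail M d2 = v" and "gend M d2 = t2"
    and "t1 \<in> verts M - S" and "t2 \<in> verts M - S" and "\<not> conn_minus M S t1 t2"
  shows "\<exists>k. (\<forall>j\<le>k. (nxt M ^^ j) d1 \<noteq> d2) \<and>
             transition_face M S (face M ((nxt M ^^ k) d1))"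
proof (rule ccontr)
  assume no_transition: "\<not> ?thesis"
  have "\<exists>n. (nxt M ^^ n) d1 = d2" using rotation_transitive assms(1,7,8,10,11) by metis
  define m where "m = (LEAST n. (nxt M ^^ n) d1 = d2)"
  have m: "(nxt M ^^ m) d1 = d2" "\<And>j. j < m \<Longrightarrow> (nxt M ^^ j) d1 \<noteq> d2"
    unfolding m_def using LeastI_ex[OF \<open>\<exists>n. _\<close>] not_less_Least by blast+
  have "d1 \<noteq> d2" using assms(9,12,15) conn_minus_refl by metis
  then have "m > 0" using m(1) by (cases m) auto
  moreover have "\<not> transition_face M S (face M ((nxt M ^^ k) d1))" if "k < m" for k
    using no_transition m(2) that by (meson le_less_trans)
  ultimately have "conn_minus M S t1 t2"
    using conn_gend_of_no_transition_face[OF assms(1-4,7)] assms(6,8,9,12-14) m(1) by blast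
  then show False using assms(15) by simp
qed

end
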